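(* Let $(\mathbf{x},\mathbf{F})$ be an LP seed of rank $n$ with $\hat F_k=F_k$ for all $k\in[1,n]$. Then for all $i\ne k$, $F_i$ is not equal to a unit multiple of $F_k$; consequently any two distinct exchange polynomials $F_i,F_k$ ($i\neq k$) are coprime in $R[x_1,\dots,x_n]$.
   Context: $R$ is a unique factorization domain containing $\mathbb{Z}$ and $\mathcal{F}$ is the field of rational functions in $n$ variables over $\mathrm{Frac}(R)$. An LP seed of rank $n$ is a pair $(\mathbf{x},\mathbf{F})$ where $\mathbf{x}=\{x_1,\dots,x_n\}$ is a transcendence basis of $\mathcal{F}$ over $\mathrm{Frac}(R)$ and $\mathbf{F}=\{F_1,\dots,F_n\}$ are irreducible polynomials in $R[x_1,\dots,x_n]$ with $x_j\nmid F_i$ for all $i,j$ and $F_i$ not involving $x_i$. The exchange Laurent polynomial is $\hat F_j=F_j/\prod_{k\neq j}x_k^{a_k}$, with $a_k\in\mathbb{Z}_{\ge0}$ maximal such that $F_k^{a_k}$ divides $F_j|_{x_k\leftarrow F_k/x'_k}$ in $R[x_1,\dots,x_{k-1},(x'_k)^{-1},x_{k+1},\dots,x_n]$ ($x'_k$ a new indeterminate). *)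

theory Defs
  imports "HOL-Library.Poly_Mapping" "HOL-Computational_Algebra.Factorial_Ring"
begin

(* Multivariate polynomials over R: finitely supported maps from monomials
 (exponent vectors nat \<Rightarrow>0 nat) to coefficients. Variable x_(i+1) of the paper is Var i. *)
type_synonym 'a mpoly = "(nat \<Rightarrow>\<^sub>0 nat) \<Rightarrow>\<^sub>0 'a"

definition Var :: "nat \<Rightarrow> 'a::comm_semiring_1 mpoly" where
  "Var i = Poly_Mapping.single (Poly_Mapping.single i 1) 1"

definition Const :: "'a::comm_semiring_1 \<Rightarrow> 'a mpoly" where
  "Const c = Poly_Mapping.single 0 c"

definition vars :: "'a::zero mpoly \<Rightarrow> nat set" where
  "vars p = \<Union> (Poly_Mapping.keys ` Poly_Mapping.keys p)"

definition in_ring :: "nat \<Rightarrow> 'a::zero mpoly \<Rightarrow> bool" where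
  "in_ring n p \<longleftrightarrow> vars p \<subseteq> {..<n}"

definition dvd_in :: "nat \<Rightarrow> 'a::comm_semiring_1 mpoly \<Rightarrow> 'a mpoly \<Rightarrow> bool" where
  "dvd_in n a b \<longleftrightarrow> (\<exists>c. in_ring n c \<and> b = a * c)"

definition unit_in :: "nat \<Rightarrow> 'a::comm_semiring_1 mpoly \<Rightarrow> bool" where
  "unit_in n u \<longleftrightarrow> in_ring n u \<and> dvd_in n u 1"

definition irreducible_in :: "nat \<Rightarrow> 'a::comm_semiring_1 mpoly \<Rightarrow> bool" where
  "irreducible_in n p \<longleftrightarrow> in_ring n p \<and> p \<noteq> 0 \<and> \<not> unit_in n p \<and>
     (\<forall>a b. in_ring n a \<longrightarrow> in_ring n b \<longrightarrow> p = a * b \<longrightarrow> unit_in n a \<or> unit_in n b)"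

definition coprime_in :: "nat \<Rightarrow> 'a::comm_semiring_1 mpoly \<Rightarrow> 'a mpoly \<Rightarrow> bool" where
  "coprime_in n p q \<longleftrightarrow>
     (\<forall>d. in_ring n d \<longrightarrow> dvd_in n d p \<longrightarrow> dvd_in n d q \<longrightarrow> unit_in n d)"

definition subst :: "nat \<Rightarrow> 'a::comm_semiring_1 mpoly \<Rightarrow> 'a mpoly \<Rightarrow> 'a mpoly" where
  "subst k q p = (\<Sum>m\<in>Poly_Mapping.keys p. Const (Poly_Mapping.lookup p m) *
      (\<Prod>v\<in>Poly_Mapping.keys (m::nat \<Rightarrow>\<^sub>0 nat). (if v = k then q else Var v) ^ Poly_Mapping.lookup m v))"

(* LP seed of rank n (cluster variables = the polynomial variables 0..n-1). *)
definition LP_seed :: "nat \<Rightarrow> (nat \<Rightarrow> 'a::comm_semiring_1 mpoly) \<Rightarrow> bool" where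
  "LP_seed n F \<longleftrightarrow> (\<forall>i<n. irreducible_in n (F i) \<and>
      (\<forall>j<n. \<not> dvd_in n (Var j) (F i)) \<and> i \<notin> vars (F i))"

(* Exponent a_k in the definition of the exchange Laurent polynomial hat F_j:
 the maximal a with F_k^a dividing F_j|_{x_k <- F_k/x'_k} in
 R[x_1..x_{k-1},(x'_k)^{-1},x_{k+1}..x_n]; the variable slot k is reused for (x'_k)^{-1},
 so F_k/x'_k becomes F_k * Var k. *)
definition exch_exp :: "nat \<Rightarrow> (nat \<Rightarrow> 'a::comm_semiring_1 mpoly) \<Rightarrow> nat \<Rightarrow> nat \<Rightarrow> nat" where
  "exch_exp n F j k = (GREATEST a. dvd_in n (F k ^ a) (subst k (F k * Var k) (F j)))"

(* Denominator monomial prod_{k<>j} x_k^{a_k}; hat F_j = F_j / exch_denom n F j. *)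
definition exch_denom :: "nat \<Rightarrow> (nat \<Rightarrow> 'a::comm_semiring_1 mpoly) \<Rightarrow> nat \<Rightarrow> 'a mpoly" where
  "exch_denom n F j = (\<Prod>k\<in>{..<n} - {j}. Var k ^ exch_exp n F j k)"

end

theory Submission
  imports Defs
begin

text \<open>
  Units of \<open>R[x\<^sub>1, \<dots>, x\<^sub>n]\<close> are constants (a total degree argument). So if
  \<open>F\<^sub>i = u F\<^sub>k\<close> with \<open>u\<close> a unit, then \<open>F\<^sub>i\<close> does not involve \<open>x\<^sub>k\<close>, the substitution
  \<open>x\<^sub>k \<leftarrow> F\<^sub>k / x'\<^sub>k\<close> leaves \<open>F\<^sub>i\<close> unchanged, and \<open>F\<^sub>k\<close> divides it; hence \<open>a\<^sub>k \<ge> 1\<close> and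
  \<open>x\<^sub>k\<close> occurs in the denominator of \<open>hat F\<^sub>i\<close>, contradicting \<open>hat F\<^sub>i = F\<^sub>i\<close>. A common
  non-unit factor of two irreducibles would make them associates, so they are coprime.
\<close>

definition monomial_degree :: "(nat \<Rightarrow>\<^sub>0 nat) \<Rightarrow> nat" where
  "monomial_degree m = (\<Sum>v\<in>Poly_Mapping.keys m. Poly_Mapping.lookup m v)"

lemma monomial_degree_add: "monomial_degree (a + b) = monomial_degree a + monomial_degree b"
  unfolding monomial_degree_def by (rule setsum_keys_plus_distrib[where f="\<lambda>k x. x"]) auto

lemma monomial_degree_eq_0_iff: "monomial_degree m = 0 \<longleftrightarrow> m = 0"
  by (auto simp: monomial_degree_def in_keys_iff intro!: poly_mapping_eqI)

definition total_degree :: "'a::zero mpoly \<Rightarrow> nat" where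
  "total_degree p = Max (insert 0 (monomial_degree ` Poly_Mapping.keys p))"

lemma total_degree_ge:
  "m \<in> Poly_Mapping.keys p \<Longrightarrow> monomial_degree m \<le> total_degree p"
  unfolding total_degree_def by (rule Max_ge) auto

lemma total_degree_in_monomial_degree_keys:
  "p \<noteq> 0 \<Longrightarrow> total_degree p \<in> monomial_degree ` Poly_Mapping.keys p"
  unfolding total_degree_def by (subst Max_insert) (auto intro: Max_in)

lemma total_degree_one: "total_degree (1::'a::comm_semiring_1 mpoly) = 0"
  unfolding total_degree_def by (simp add: monomial_degree_def)

lemma total_degree_eq_0_imp_Const:
  assumes "total_degree p = 0" shows "p = Const (Poly_Mapping.lookup p 0)"
proof (rule poly_mapping_eqI)
  fix m
  have "m = 0" if "m \<in> Poly_Mapping.keys p"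
    using total_degree_ge[OF that] assms by (simp add: monomial_degree_eq_0_iff)
  then show "Poly_Mapping.lookup p m = Poly_Mapping.lookup (Const (Poly_Mapping.lookup p 0)) m"
    by (auto simp: Const_def lookup_single when_def in_keys_iff)
qed

lemma sum_single_lookup:
  "(\<Sum>a\<in>Poly_Mapping.keys p. Poly_Mapping.single a (Poly_Mapping.lookup p a))
    = (p :: 'a \<Rightarrow>\<^sub>0 'b::comm_monoid_add)"
  by (rule poly_mapping_eqI)
     (auto simp: lookup_sum lookup_single when_def in_keys_iff sum.delta' split: if_splits)

lemma lookup_mult_keys:
  fixes f g :: "'a::comm_semiring_1 mpoly"
  shows "Poly_Mapping.lookup (f * g) k =
    (\<Sum>a\<in>Poly_Mapping.keys f. \<Sum>b\<in>Poly_Mapping.keys g.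
        if a + b = k then Poly_Mapping.lookup f a * Poly_Mapping.lookup g b else 0)"
proof -
  have "f * g = (\<Sum>a\<in>Poly_Mapping.keys f. \<Sum>b\<in>Poly_Mapping.keys g.
      Poly_Mapping.single (a + b) (Poly_Mapping.lookup f a * Poly_Mapping.lookup g b))"
    by (subst (1 2) sum_single_lookup[symmetric]) (simp add: sum_product mult_single)
  then show ?thesis
    by (simp add: lookup_sum lookup_single when_def eq_commute)
qed

lemma lookup_mult_unique_decomposition:
  fixes f g :: "'a::comm_semiring_1 mpoly"
  assumes "a0 \<in> Poly_Mapping.keys f" "b0 \<in> Poly_Mapping.keys g"
    and unique: "\<And>a b. a \<in> Poly_Mapping.keys f \<Longrightarrow> b \<in> Poly_Mapping.keys g \<Longrightarrow>
      a + b = a0 + b0 \<Longrightarrow> a = a0 \<and> b = b0"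
  shows "Poly_Mapping.lookup (f * g) (a0 + b0) = Poly_Mapping.lookup f a0 * Poly_Mapping.lookup g b0"
proof -
  have "Poly_Mapping.lookup (f * g) (a0 + b0) = (\<Sum>a\<in>Poly_Mapping.keys f. \<Sum>b\<in>Poly_Mapping.keys g.
      if b = b0 then if a = a0 then Poly_Mapping.lookup f a * Poly_Mapping.lookup g b else 0 else 0)"
    unfolding lookup_mult_keys by (intro sum.cong refl) (use unique in fastforce)
  also have "\<dots> = Poly_Mapping.lookup f a0 * Poly_Mapping.lookup g b0"
    using assms(1,2) by (simp add: sum.delta')
  finally show ?thesis .
qed

lemma total_degree_mult:
  fixes f g :: "'a::idom mpoly"
  assumes "f \<noteq> 0" "g \<noteq> 0"
  shows "total_degree f + total_degree g \<le> total_degree (f * g)"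
proof -
  define top :: "'a mpoly \<Rightarrow> _"
    where "top p = {m \<in> Poly_Mapping.keys p. monomial_degree m = total_degree p}" for p
  have top: "finite (top p)" "top p \<noteq> {}" if "p \<noteq> 0" for p
    using total_degree_in_monomial_degree_keys[OF that] by (auto simp: top_def)
  \<comment> \<open>The lexicographically largest top-degree monomials of \<open>f\<close> and \<open>g\<close>
      multiply to a term of \<open>f * g\<close> that cannot cancel.\<close>
  define a0 b0 where "a0 = Max (top f)" and "b0 = Max (top g)"
  have a0: "a0 \<in> top f" and b0: "b0 \<in> top g"
    unfolding a0_def b0_def using top assms by (metis Max_in)+
  have "a = a0 \<and> b = b0"
    if ab: "a \<in> Poly_Mapping.keys f" "b \<in> Poly_Mapping.keys g" "a + b = a0 + b0" for a b
  proof -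
    have "monomial_degree a + monomial_degree b = total_degree f + total_degree g"
      using a0 b0 arg_cong[OF ab(3), of monomial_degree] by (simp add: monomial_degree_add top_def)
    with total_degree_ge[OF ab(1)] total_degree_ge[OF ab(2)] have "a \<in> top f" "b \<in> top g"
      using ab(1,2) by (simp_all add: top_def)
    then have le: "a \<le> a0" "b \<le> b0"
      unfolding a0_def b0_def using top assms by (metis Max_ge)+
    have "a = a0"
    proof (rule ccontr)
      assume "a \<noteq> a0"
      with le have "a + b < a0 + b0" by (intro add_less_le_mono) simp_all
      with ab(3) show False by simp
    qed
    with ab(3) show ?thesis by simp
  qed
  then have "Poly_Mapping.lookup (f * g) (a0 + b0) = Poly_Mapping.lookup f a0 * Poly_Mapping.lookup g b0"
    using a0 b0 by (intro lookup_mult_unique_decomposition) (simp_all add: top_def)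
  then have "a0 + b0 \<in> Poly_Mapping.keys (f * g)"
    using a0 b0 by (simp add: in_keys_iff top_def)
  then have "monomial_degree (a0 + b0) \<le> total_degree (f * g)"
    by (rule total_degree_ge)
  then show ?thesis
    using a0 b0 by (simp add: monomial_degree_add top_def)
qed

lemma total_degree_power:
  fixes p :: "'a::idom mpoly"
  assumes "p \<noteq> 0" shows "n * total_degree p \<le> total_degree (p ^ n)"
proof (induction n)
  case (Suc n)
  have "total_degree p + total_degree (p ^ n) \<le> total_degree (p * p ^ n)"
    using assms by (intro total_degree_mult) auto
  with Suc show ?case by simp
qed simp

lemma Const_mult: "Const c * Const d = Const (c * d)"
  by (simp add: Const_def mult_single)

lemma Const_1: "Const 1 = 1"
  by (simp add: Const_def)

lemma Const_power: "Const c ^ n = Const (c ^ n)"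
  by (induction n) (simp_all add: Const_def mult_single)

lemma lookup_Const_mult:
  fixes q :: "'a::comm_semiring_1 mpoly"
  shows "Poly_Mapping.lookup (Const c * q) m = c * Poly_Mapping.lookup q m"
  by (simp add: Const_def mult_map_scale_conv_mult[symmetric] map.rep_eq when_def)

lemma vars_Const_mult: "vars (Const c * (q::'a::comm_semiring_1 mpoly)) \<subseteq> vars q"
proof -
  have "Poly_Mapping.keys (Const c * q) \<subseteq> Poly_Mapping.keys q"
    by (auto simp: in_keys_iff lookup_Const_mult)
  then show ?thesis
    unfolding vars_def by blast
qed

lemma in_ring_Const: "in_ring n (Const c)"
  by (simp add: in_ring_def vars_def Const_def)

lemma dvd_1_imp_Const:
  fixes u :: "'a::idom mpoly"
  assumes "u dvd 1" shows "\<exists>c. u = Const c \<and> c dvd 1"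
proof -
  from assms obtain v where v: "1 = u * v" by (auto elim: dvdE)
  then have "total_degree u + total_degree v \<le> 0"
    using total_degree_mult[of u v] total_degree_one
    by (metis mult_zero_left mult_zero_right zero_neq_one)
  then have "u = Const (Poly_Mapping.lookup u 0)" "v = Const (Poly_Mapping.lookup v 0)"
    by (auto intro: total_degree_eq_0_imp_Const)
  with v have "1 = Const (Poly_Mapping.lookup u 0 * Poly_Mapping.lookup v 0)"
    by (metis Const_mult)
  then have "Poly_Mapping.lookup u 0 * Poly_Mapping.lookup v 0 = 1"
    by (metis Const_1 Const_def inj_single inj_eq)
  then have "Poly_Mapping.lookup u 0 dvd 1"
    by (rule dvdI[OF sym])
  with \<open>u = Const _\<close> show ?thesis by blast
qed

lemma unit_in_iff_dvd_1:
  fixes u :: "'a::idom mpoly"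
  shows "unit_in n u \<longleftrightarrow> u dvd 1"
proof
  assume "u dvd 1"
  then obtain c d where "u = Const c" "1 = c * d"
    using dvd_1_imp_Const by (metis dvdE)
  then have "1 = u * Const d"
    by (simp add: Const_mult Const_1)
  then show "unit_in n u"
    using \<open>u = Const c\<close> in_ring_Const unfolding unit_in_def dvd_in_def by blast
qed (auto simp: unit_in_def dvd_in_def intro: dvdI)

lemma finite_mpoly_divisor_powers:
  fixes p :: "'a::{factorial_semiring, idom} mpoly"
  assumes "Y \<noteq> 0" "\<not> p dvd 1"
  shows "finite {a. p ^ a dvd Y}"
proof (cases "total_degree p = 0")
  case False
  have "a \<le> total_degree Y" if "p ^ a dvd Y" for a
  proof -
    from that obtain C where C: "Y = p ^ a * C" by (elim dvdE)
    have "a \<le> a * total_degree p" using False by simp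
    also have "\<dots> \<le> total_degree (p ^ a)"
      using False by (intro total_degree_power) (auto simp: total_degree_def)
    also have "\<dots> \<le> total_degree Y" using total_degree_mult[of "p ^ a" C] C assms(1) by auto
    finally show ?thesis .
  qed
  then show ?thesis unfolding finite_nat_set_iff_bounded_le by blast
next
  \<comment> \<open>A constant non-unit \<open>c\<close>: its powers divide a fixed nonzero coefficient of \<open>Y\<close>.\<close>
  case True
  define c where "c = Poly_Mapping.lookup p 0"
  have p: "p = Const c" using total_degree_eq_0_imp_Const[OF True] c_def by simp
  obtain m where m: "Poly_Mapping.lookup Y m \<noteq> 0"
    using assms(1) poly_mapping_eqI[of Y 0] by auto
  have "{a. p ^ a dvd Y} \<subseteq> {a. c ^ a dvd Poly_Mapping.lookup Y m}"
    by (auto simp: p Const_power lookup_Const_mult elim!: dvdE)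
  moreover have "finite {a. c ^ a dvd Poly_Mapping.lookup Y m}"
  proof (rule finite_divisor_powers)
    show "\<not> is_unit c" using assms(2) p by (metis Const_1 Const_mult dvd_def)
  qed (fact m)
  ultimately show ?thesis by (rule finite_subset)
qed

lemma Var_power:
  "(Var v :: 'a::comm_semiring_1 mpoly) ^ e = Poly_Mapping.single (Poly_Mapping.single v e) 1"
  by (induction e) (simp_all add: Var_def mult_single single_add[symmetric])

lemma prod_single:
  assumes "finite S"
  shows "(\<Prod>v\<in>S. Poly_Mapping.single (g v) (1::'a::comm_semiring_1))
    = Poly_Mapping.single (\<Sum>v\<in>S. g v) 1"
  using assms by (induction S rule: finite_induct) (simp_all add: mult_single)

lemma prod_Var_power_eq_monomial:
  "(\<Prod>v\<in>Poly_Mapping.keys m. (Var v :: 'a::comm_semiring_1 mpoly) ^ Poly_Mapping.lookup m v)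
    = Poly_Mapping.single m 1"
  by (simp add: Var_power prod_single sum_single_lookup)

lemma subst_eq_self:
  fixes p :: "'a::comm_semiring_1 mpoly"
  assumes "k \<notin> vars p"
  shows "subst k q p = p"
proof -
  have "subst k q p = (\<Sum>m\<in>Poly_Mapping.keys p. Const (Poly_Mapping.lookup p m) *
      (\<Prod>v\<in>Poly_Mapping.keys m. Var v ^ Poly_Mapping.lookup m v))"
    unfolding subst_def using assms
    by (intro sum.cong refl arg_cong2[where f="(*)"] prod.cong) (auto simp: vars_def)
  also have "\<dots> = (\<Sum>m\<in>Poly_Mapping.keys p. Poly_Mapping.single m (Poly_Mapping.lookup p m))"
    by (simp add: prod_Var_power_eq_monomial Const_def mult_single)
  finally show ?thesis
    by (simp add: sum_single_lookup)
qed

lemma single_one_eq_single_one_iff: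
  "Poly_Mapping.single a (1::'b::zero_neq_one) = Poly_Mapping.single b 1 \<longleftrightarrow> a = b"
  by (metis lookup_single_eq lookup_single_not_eq zero_neq_one)

lemma le_exch_exp:
  assumes "finite {a. dvd_in n (F k ^ a) (subst k (F k * Var k) (F j))}"
    and "dvd_in n (F k ^ a) (subst k (F k * Var k) (F j))"
  shows "a \<le> exch_exp n F j k"
proof -
  obtain b where "\<forall>a' \<in> {a. dvd_in n (F k ^ a) (subst k (F k * Var k) (F j))}. a' \<le> b"
    using assms(1) unfolding finite_nat_set_iff_bounded_le by blast
  then show ?thesis
    unfolding exch_exp_def using assms(2) by (intro Greatest_le_nat[where b = b]) auto
qed

lemma exch_exp_eq_0_if_exch_denom_eq_1:
  fixes F :: "nat \<Rightarrow> 'a::comm_semiring_1 mpoly"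
  assumes "exch_denom n F j = 1" "k < n" "k \<noteq> j"
  shows "exch_exp n F j k = 0"
proof -
  let ?m = "\<Sum>k'\<in>{..<n} - {j}. Poly_Mapping.single k' (exch_exp n F j k')"
  have "Poly_Mapping.single ?m 1 = (1 :: 'a mpoly)"
    using assms(1) by (simp add: exch_denom_def Var_power prod_single)
  then have "?m = 0"
    by (metis single_one single_one_eq_single_one_iff)
  then have "Poly_Mapping.lookup ?m k = 0"
    by simp
  then show ?thesis
    using assms(2,3) by (simp add: lookup_sum lookup_single when_def)
qed

lemma exchange_polynomial_not_associated:
  fixes F :: "nat \<Rightarrow> 'a::{factorial_semiring, idom} mpoly"
  assumes seed: "LP_seed n F" and denom: "exch_denom n F i = 1"
    and ik: "i < n" "k < n" "i \<noteq> k" and u: "unit_in n u"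
  shows "F i \<noteq> u * F k"
proof
  assume Fi: "F i = u * F k"
  obtain c where c: "u = Const c"
    using u unit_in_iff_dvd_1 dvd_1_imp_Const by blast
  have "k \<notin> vars (F k)" "F i \<noteq> 0" "\<not> unit_in n (F k)"
    using seed ik by (auto simp: LP_seed_def irreducible_in_def)
  moreover have "vars (F i) \<subseteq> vars (F k)"
    unfolding Fi c by (rule vars_Const_mult)
  ultimately have "k \<notin> vars (F i)"
    by blast
  then have subst: "subst k (F k * Var k) (F i) = F i"
    by (rule subst_eq_self)
  have "{a. dvd_in n (F k ^ a) (subst k (F k * Var k) (F i))} \<subseteq> {a. F k ^ a dvd F i}"
    by (auto simp: subst dvd_in_def)
  moreover have "finite {a. F k ^ a dvd F i}"
    using \<open>F i \<noteq> 0\<close> \<open>\<not> unit_in n (F k)\<close>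
    by (intro finite_mpoly_divisor_powers) (simp_all add: unit_in_iff_dvd_1)
  moreover have "dvd_in n (F k ^ 1) (subst k (F k * Var k) (F i))"
    using Fi u unfolding subst dvd_in_def unit_in_def by (metis mult.commute power_one_right)
  ultimately have "1 \<le> exch_exp n F i k"
    by (intro le_exch_exp) (auto intro: finite_subset)
  moreover have "exch_exp n F i k = 0"
    using denom ik by (intro exch_exp_eq_0_if_exch_denom_eq_1) auto
  ultimately show False
    by simp
qed

lemma coprime_in_if_not_associated:
  fixes p q :: "'a::idom mpoly"
  assumes "irreducible_in n p" "irreducible_in n q"
    and not_assoc: "\<And>u. unit_in n u \<Longrightarrow> p \<noteq> u * q"
  shows "coprime_in n p q"
  unfolding coprime_in_def
proof (intro allI impI)
  fix d assume d: "in_ring n d" "dvd_in n d p" "dvd_in n d q"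
  then obtain c1 c2 where c: "in_ring n c1" "p = d * c1" "in_ring n c2" "q = d * c2"
    by (auto simp: dvd_in_def)
  show "unit_in n d"
  proof (rule ccontr)
    assume "\<not> unit_in n d"
    then have "unit_in n c1" "unit_in n c2"
      using assms(1,2) c d(1) unfolding irreducible_in_def by blast+
    then have "c1 dvd 1" "c2 dvd 1"
      by (simp_all add: unit_in_iff_dvd_1)
    then obtain w where w: "1 = c2 * w"
      by (elim dvdE)
    have "p = d * c1 * (c2 * w)"
      using c(2) w by simp
    also have "\<dots> = (w * c1) * q"
      using c(4) by (simp add: ac_simps)
    finally have "p = (w * c1) * q" .
    moreover have "unit_in n (w * c1)"
      unfolding unit_in_iff_dvd_1
      using mult_dvd_mono[OF dvd_triv_right[of w c2] \<open>c1 dvd 1\<close>] w by simp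
    ultimately show False
      using not_assoc by blast
  qed
qed

theorem proposition4p9:
  fixes F :: "nat \<Rightarrow> 'a::{factorial_semiring, idom, ring_char_0} mpoly" and n :: nat
  assumes "LP_seed n F"
    and "\<forall>k<n. exch_denom n F k = 1"
  shows "\<forall>i<n. \<forall>k<n. i \<noteq> k \<longrightarrow>
           \<not> (\<exists>u. unit_in n u \<and> F i = u * F k) \<and> coprime_in n (F i) (F k)"
proof (intro allI impI)
  fix i k assume ik: "i < n" "k < n" "i \<noteq> k"
  have not_assoc: "F i \<noteq> u * F k" if "unit_in n u" for u
    using exchange_polynomial_not_associated[OF assms(1) _ ik that] assms(2) ik(1) by blast
  moreover have "coprime_in n (F i) (F k)"
    using assms(1) ik by (intro coprime_in_if_not_associated not_assoc) (auto simp: LP_seed_def)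
  ultimately show "\<not> (\<exists>u. unit_in n u \<and> F i = u * F k) \<and> coprime_in n (F i) (F k)"
    by blast
qed

end
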